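(* Let $\theta\in(0,\pi/4)$ and $|\Psi\rangle=\sin\theta|00\rangle+\cos\theta|11\rangle$ on system qubits $1,2$. Let $|\varphi_\pm\rangle=\cos\theta|0\rangle\mp\sin\theta|1\rangle$, and $$\Omega_1=|00\rangle\langle00|+|11\rangle\langle11|,\quad \Omega_2=\mathbb 1-|{+}\rangle\langle{+}|\otimes|\varphi_+\rangle\langle\varphi_+|,\quad \Omega_3=\mathbb 1-|{-}\rangle\langle{-}|\otimes|\varphi_-\rangle\langle\varphi_-|.$$ Let $R_2=H\otimes\begin{pmatrix}\cos\theta&-\sin\theta\\ \sin\theta&\cos\theta\end{pmatrix}$ and $R_3=XH\otimes\begin{pmatrix}\cos\theta&\sin\theta\\ -\sin\theta&\cos\theta\end{pmatrix}$. Define, with ancilla qubits $a_1,a_2,a_3$, $$\mathcal M_1=(\mathbb 1\otimes|0\rangle\langle0|_{a_1})\mathcal C_{X1a_1}\mathcal C_{X2a_1},$$ $$\mathcal M^t_i=(\mathbb 1\otimes|0\rangle\langle0|_{a_i})(R_i^\dagger\otimes\mathbb 1)(X\otimes X\otimes\mathbb 1)\,\mathcal C^2_{X12a_i}\,(X\otimes X\otimes\mathbb 1)(R_i\otimes\mathbb 1),\quad i=2,3.$$ Then $\mathcal M^t_i(\sigma\otimes|0\rangle\langle0|_{a_i})=\Omega_i\sigma\otimes|0\rangle\langle0|_{a_i}$ for $i=2,3$, $\Omega_1\Omega_2\Omega_3=|\Psi\rangle\langle\Psi|$, and hence for every two-qubit operator $\sigma$, $$\mathcal M_1\mathcal M^t_2\mathcal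 M^t_3\big(\sigma\otimes|000\rangle\langle000|\big)=|\Psi\rangle\langle\Psi|\sigma\otimes|000\rangle\langle000|.$$ Furthermore, for $i=2,3$, the two-ancilla operator $\mathcal M^b_i=\mathbb 1-(\mathbb 1\otimes|00\rangle\langle00|_{aa'})(R_i^\dagger\otimes\mathbb 1)\mathcal C_{X1a}\mathcal C_{X2a'}(R_i\otimes\mathbb 1)$ satisfies $\mathcal M^b_i(\sigma\otimes|00\rangle\langle00|_{aa'})=\Omega_i\sigma\otimes|00\rangle\langle00|_{aa'}$, so replacing each $\mathcal M^t_i$ by $\mathcal M^b_i$ (with fresh ancilla pairs) yields the same action on inputs with all ancillas in $|0\rangle$.
   Context: $|\pm\rangle=(|0\rangle\pm|1\rangle)/\sqrt2$; $H$ is the Hadamard gate, $X$ is Pauli-$X$. $\mathcal C_{Xja}$ is the CNOT gate with control system qubit $j$ and target ancilla $a$; $\mathcal C^2_{X12a}$ is the Toffoli gate with controls system qubits $1,2$ and target $a$ (flips $a$ iff both controls are $|1\rangle$). All operators are extended by the identity on qubits they do not act on; $\sigma$ is any operator on the two system qubits. *)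

theory Defs
  imports Complex_Main "Jordan_Normal_Form.Matrix"
begin

(* An operator on an n-qubit register is a complex 2^n x 2^n matrix.
   Computational basis index x (0 <= x < 2^n) is big-endian: qubit k (0-based,
   k = 0 is the leftmost tensor factor) carries the bit (x div 2^(n-1-k)) mod 2.
   The Kronecker product kron A B puts A on the leading (leftmost) qubits, which
   is consistent with this bit convention. *)

definition kron :: "complex mat \<Rightarrow> complex mat \<Rightarrow> complex mat" where
  "kron A B = mat (dim_row A * dim_row B) (dim_col A * dim_col B)
     (\<lambda>(i,j). A $$ (i div dim_row B, j div dim_col B) * B $$ (i mod dim_row B, j mod dim_col B))"

definition dagger :: "complex mat \<Rightarrow> complex mat" where
  "dagger A = mat (dim_col A) (dim_row A) (\<lambda>(i,j). cnj (A $$ (j,i)))"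

definition outer :: "complex vec \<Rightarrow> complex vec \<Rightarrow> complex mat" where
  "outer u v = mat (dim_vec u) (dim_vec v) (\<lambda>(i,j). u $ i * cnj (v $ j))"

definition vkron :: "complex vec \<Rightarrow> complex vec \<Rightarrow> complex vec" where
  "vkron u v = vec (dim_vec u * dim_vec v) (\<lambda>i. u $ (i div dim_vec v) * v $ (i mod dim_vec v))"

definition ket0 :: "complex vec" where "ket0 = vec_of_list [1, 0]"
definition ket1 :: "complex vec" where "ket1 = vec_of_list [0, 1]"
definition ketp :: "complex vec" where "ketp = vec_of_list [1 / sqrt 2, 1 / sqrt 2]"
definition ketm :: "complex vec" where "ketm = vec_of_list [1 / sqrt 2, - 1 / sqrt 2]"

definition hadamard :: "complex mat" where
  "hadamard = mat_of_rows_list 2 [[1 / sqrt 2, 1 / sqrt 2], [1 / sqrt 2, - 1 / sqrt 2]]"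
definition pauliX :: "complex mat" where
  "pauliX = mat_of_rows_list 2 [[0, 1], [1, 0]]"

definition qbit :: "nat \<Rightarrow> nat \<Rightarrow> nat \<Rightarrow> nat" where
  "qbit n k x = (x div 2 ^ (n - 1 - k)) mod 2"

definition flipq :: "nat \<Rightarrow> nat \<Rightarrow> nat \<Rightarrow> nat" where
  "flipq n t x = (if qbit n t x = 0 then x + 2 ^ (n - 1 - t) else x - 2 ^ (n - 1 - t))"

definition cnot :: "nat \<Rightarrow> nat \<Rightarrow> nat \<Rightarrow> complex mat" where
  "cnot n c t = mat (2^n) (2^n)
     (\<lambda>(i,j). if i = (if qbit n c j = 1 then flipq n t j else j) then 1 else 0)"

definition toffoli :: "nat \<Rightarrow> nat \<Rightarrow> nat \<Rightarrow> nat \<Rightarrow> complex mat" where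
  "toffoli n c1 c2 t = mat (2^n) (2^n)
     (\<lambda>(i,j). if i = (if qbit n c1 j = 1 \<and> qbit n c2 j = 1 then flipq n t j else j) then 1 else 0)"

definition proj0q :: "nat \<Rightarrow> nat \<Rightarrow> complex mat" where
  "proj0q n k = mat (2^n) (2^n) (\<lambda>(i,j). if i = j \<and> qbit n k j = 0 then 1 else 0)"

definition proj_zeros :: "nat \<Rightarrow> complex mat" where
  "proj_zeros m = mat (2^m) (2^m) (\<lambda>(i,j). if i = 0 \<and> j = 0 then 1 else 0)"

definition onsys :: "nat \<Rightarrow> complex mat \<Rightarrow> complex mat" where
  "onsys n A = kron A (1\<^sub>m (2 ^ (n - 2)))"

definition rotm :: "real \<Rightarrow> complex mat" where
  "rotm \<theta> = mat_of_rows_list 2 [[cos \<theta>, - sin \<theta>], [sin \<theta>, cos \<theta>]]"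

definition Psi :: "real \<Rightarrow> complex vec" where
  "Psi \<theta> = sin \<theta> \<cdot>\<^sub>v vkron ket0 ket0 + cos \<theta> \<cdot>\<^sub>v vkron ket1 ket1"

definition phip :: "real \<Rightarrow> complex vec" where
  "phip \<theta> = cos \<theta> \<cdot>\<^sub>v ket0 - sin \<theta> \<cdot>\<^sub>v ket1"
definition phim :: "real \<Rightarrow> complex vec" where
  "phim \<theta> = cos \<theta> \<cdot>\<^sub>v ket0 + sin \<theta> \<cdot>\<^sub>v ket1"

definition Omega1 :: "complex mat" where
  "Omega1 = outer (vkron ket0 ket0) (vkron ket0 ket0) + outer (vkron ket1 ket1) (vkron ket1 ket1)"
definition Omega2 :: "real \<Rightarrow> complex mat" where
  "Omega2 \<theta> = 1\<^sub>m 4 - kron (outer ketp ketp) (outer (phip \<theta>) (phip \<theta>))"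
definition Omega3 :: "real \<Rightarrow> complex mat" where
  "Omega3 \<theta> = 1\<^sub>m 4 - kron (outer ketm ketm) (outer (phim \<theta>) (phim \<theta>))"

definition R2 :: "real \<Rightarrow> complex mat" where
  "R2 \<theta> = kron hadamard (rotm \<theta>)"
definition R3 :: "real \<Rightarrow> complex mat" where
  "R3 \<theta> = kron (pauliX * hadamard) (mat_of_rows_list 2 [[cos \<theta>, sin \<theta>], [- sin \<theta>, cos \<theta>]])"

definition M1 :: "nat \<Rightarrow> nat \<Rightarrow> complex mat" where
  "M1 n a = proj0q n a * cnot n 0 a * cnot n 1 a"

definition Mt :: "nat \<Rightarrow> complex mat \<Rightarrow> nat \<Rightarrow> complex mat" where
  "Mt n R a = proj0q n a * onsys n (dagger R) * onsys n (kron pauliX pauliX)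
      * toffoli n 0 1 a * onsys n (kron pauliX pauliX) * onsys n R"

definition Mb :: "nat \<Rightarrow> complex mat \<Rightarrow> nat \<Rightarrow> nat \<Rightarrow> complex mat" where
  "Mb n R a a' = 1\<^sub>m (2^n) - proj0q n a * proj0q n a' * onsys n (dagger R)
      * cnot n 0 a * cnot n 1 a' * onsys n R"

end

theory Submission
  imports Defs
begin

(*
  Each filter acts on inputs whose ancillas are all |0> through a two-qubit operator on the system.
  A gate flipping an ancilla under a condition on the system bits is the sum
  (projector onto the failing system states) (x) 1 + (projector onto the passing ones) (x) flip,
  so after the final projection of the ancillas onto |0> only the system states that leave every
  ancilla at |0> survive.  For M_1 these are the states of even parity, giving Omega_1.  In M^t_i the
  conjugation by X (x) X moves the Toffoli control from |11> to |00>, so the survivors are the states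
  orthogonal to R_i^dag |00>; M^b_i instead keeps R_i^dag |00><00| R_i and subtracts it from 1.
  Either way the result is 1 - R_i^dag |00><00| R_i, which is Omega_i because R_i maps the rejected
  state |+-> (x) |phi_+-> to |00>.  The product Omega_1 Omega_2 Omega_3 = |Psi><Psi| is then a direct
  4 x 4 computation.
*)

(* Variants of the carrier-based laws of Jordan_Normal_Form whose side conditions simp can discharge. *)

lemma add_mult_distrib_dim:
  "dim_row A = dim_row B \<Longrightarrow> dim_col A = dim_col B \<Longrightarrow> dim_col A = dim_row C \<Longrightarrow>
   (A + B) * C = A * C + B * (C :: 'a :: semiring_0 mat)"
  by (rule add_mult_distrib_mat[of _ "dim_row A" "dim_col A" _ _ "dim_col C"]) auto

lemma mult_add_distrib_dim:
  "dim_row B = dim_row C \<Longrightarrow> dim_col B = dim_col C \<Longrightarrow> dim_col A = dim_row B \<Longrightarrow>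
   A * (B + C) = A * B + A * (C :: 'a :: semiring_0 mat)"
  by (rule mult_add_distrib_mat[of _ "dim_row A" "dim_col A" _ "dim_col B"]) auto

lemma minus_mult_distrib_dim:
  "dim_row A = dim_row B \<Longrightarrow> dim_col A = dim_col B \<Longrightarrow> dim_col A = dim_row C \<Longrightarrow>
   (A - B) * C = A * C - B * (C :: 'a :: ring mat)"
  by (rule minus_mult_distrib_mat[of _ "dim_row A" "dim_col A" _ _ "dim_col C"]) auto

lemma assoc_mult_dim:
  "dim_col A = dim_row B \<Longrightarrow> dim_col B = dim_row C \<Longrightarrow> A * B * C = A * (B * (C :: 'a :: semiring_0 mat))"
  by (rule assoc_mult_mat[of _ "dim_row A" "dim_col A" _ "dim_col B" _ "dim_col C"]) auto

lemma left_mult_one_dim: "dim_row A = n \<Longrightarrow> 1\<^sub>m n * A = (A :: 'a :: semiring_1 mat)"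
  by (rule left_mult_one_mat) auto

lemma right_add_zero_dim: "dim_row A = n \<Longrightarrow> dim_col A = k \<Longrightarrow> A + 0\<^sub>m n k = (A :: 'a :: monoid_add mat)"
  by (rule right_add_zero_mat) auto

lemma left_add_zero_dim: "dim_row A = n \<Longrightarrow> dim_col A = k \<Longrightarrow> 0\<^sub>m n k + A = (A :: 'a :: monoid_add mat)"
  by (rule left_add_zero_mat) auto

section \<open>Kronecker products\<close>

lemma sum_lessThan_mult_split: "(\<Sum>k<p * q. f k) = (\<Sum>a<p. \<Sum>b<q. f (a * q + b :: nat))"
proof -
  have "sum f {a * q..<a * q + q} = (\<Sum>b<q. f (a * q + b))" for a
    using sum.shift_bounds_nat_ivl[of f 0 "a * q" q] by (simp add: atLeast0LessThan add.commute)
  then show ?thesis by (simp add: sum.nat_group[symmetric])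
qed

lemma dim_kron [simp]:
  "dim_row (kron A B) = dim_row A * dim_row B" "dim_col (kron A B) = dim_col A * dim_col B"
  by (simp_all add: kron_def)

lemma index_kron:
  "i < dim_row A * dim_row B \<Longrightarrow> j < dim_col A * dim_col B \<Longrightarrow>
   kron A B $$ (i, j) = A $$ (i div dim_row B, j div dim_col B) * B $$ (i mod dim_row B, j mod dim_col B)"
  by (simp add: kron_def)

lemma kron_mult:
  assumes "dim_col A = dim_row C" "dim_col B = dim_row D"
  shows "kron A B * kron C D = kron (A * C) (B * D)"
proof (rule eq_matI)
  fix i j assume "i < dim_row (kron (A * C) (B * D))" "j < dim_col (kron (A * C) (B * D))"
  then have i: "i < dim_row A * dim_row B" and j: "j < dim_col C * dim_col D" by auto
  let ?b = "dim_row B" and ?d = "dim_col D" and ?p = "dim_col A" and ?q = "dim_col B"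
  have "0 < ?b" "0 < ?d" using i j by (auto intro!: gr0I)
  have "(kron A B * kron C D) $$ (i, j) = (\<Sum>k<?p * ?q. kron A B $$ (i, k) * kron C D $$ (k, j))"
    using i j assms by (simp add: scalar_prod_def atLeast0LessThan)
  also have "\<dots> = (\<Sum>x<?p. \<Sum>y<?q. (A $$ (i div ?b, x) * C $$ (x, j div ?d)) * (B $$ (i mod ?b, y) * D $$ (y, j mod ?d)))"
    unfolding sum_lessThan_mult_split
  proof (intro sum.cong refl)
    fix x y assume x: "x \<in> {..<?p}" and y: "y \<in> {..<?q}"
    have "x * ?q + y < Suc x * ?q" using y by simp
    also have "\<dots> \<le> ?p * ?q" using x by (intro mult_le_mono1) simp
    finally have "x * ?q + y < ?p * ?q" .
    then show "kron A B $$ (i, x * ?q + y) * kron C D $$ (x * ?q + y, j) =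
        (A $$ (i div ?b, x) * C $$ (x, j div ?d)) * (B $$ (i mod ?b, y) * D $$ (y, j mod ?d))"
      using i j y assms by (simp add: index_kron mult_ac)
  qed
  also have "\<dots> = kron (A * C) (B * D) $$ (i, j)"
    using i j assms \<open>0 < ?b\<close> \<open>0 < ?d\<close>
    by (simp add: index_kron scalar_prod_def atLeast0LessThan sum_product less_mult_imp_div_less)
  finally show "(kron A B * kron C D) $$ (i, j) = kron (A * C) (B * D) $$ (i, j)" .
qed simp_all

lemma kron_add_left:
  assumes "dim_row A = dim_row B" "dim_col A = dim_col B"
  shows "kron (A + B) C = kron A C + kron B C"
proof (rule eq_matI)
  fix i j assume "i < dim_row (kron A C + kron B C)" "j < dim_col (kron A C + kron B C)"
  then have ij: "i < dim_row B * dim_row C" "j < dim_col B * dim_col C" by auto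
  then have "0 < dim_row C" "0 < dim_col C" by (auto intro!: gr0I)
  with ij show "kron (A + B) C $$ (i, j) = (kron A C + kron B C) $$ (i, j)"
    using assms by (simp add: index_kron less_mult_imp_div_less distrib_right)
qed (use assms in auto)

lemma kron_minus_left:
  assumes "dim_row A = dim_row B" "dim_col A = dim_col B"
  shows "kron (A - B) C = kron A C - kron B C"
proof (rule eq_matI)
  fix i j assume "i < dim_row (kron A C - kron B C)" "j < dim_col (kron A C - kron B C)"
  then have ij: "i < dim_row B * dim_row C" "j < dim_col B * dim_col C" by auto
  then have "0 < dim_row C" "0 < dim_col C" by (auto intro!: gr0I)
  with ij show "kron (A - B) C $$ (i, j) = (kron A C - kron B C) $$ (i, j)"
    using assms by (simp add: index_kron less_mult_imp_div_less left_diff_distrib)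
qed (use assms in auto)

lemma kron_zero_right: "kron A (0\<^sub>m r c) = 0\<^sub>m (dim_row A * r) (dim_col A * c)"
proof (rule eq_matI)
  fix i j assume "i < dim_row (0\<^sub>m (dim_row A * r) (dim_col A * c) :: complex mat)"
    and "j < dim_col (0\<^sub>m (dim_row A * r) (dim_col A * c) :: complex mat)"
  moreover from this have "0 < r" "0 < c" by (auto intro!: gr0I)
  ultimately show "kron A (0\<^sub>m r c) $$ (i, j) = 0\<^sub>m (dim_row A * r) (dim_col A * c) $$ (i, j)"
    by (simp add: index_kron)
qed simp_all

lemma qbit_eq_bit: "qbit n k x = of_bool (bit x (n - 1 - k))"
  by (simp add: qbit_def bit_iff_odd odd_iff_mod_2_eq_one)

lemma flipq_eq_flip_bit: "flipq n k x = flip_bit (n - 1 - k) x"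
proof (cases "bit x (n - 1 - k)")
  case True
  have "set_bit (n - 1 - k) (unset_bit (n - 1 - k) x) = x"
    using True by (intro bit_eqI) (auto simp: bit_simps)
  then have "x = unset_bit (n - 1 - k) x + 2 ^ (n - 1 - k)"
    using set_bit_eq[of "n - 1 - k" "unset_bit (n - 1 - k) x"] by (simp add: bit_unset_bit_iff)
  with True show ?thesis by (simp add: flipq_def flip_bit_eq_if qbit_eq_bit)
next
  case False
  then show ?thesis by (simp add: flipq_def flip_bit_eq_if qbit_eq_bit set_bit_eq)
qed

lemma flipq_less: assumes "x < 2 ^ n" "k < n" shows "flipq n k x < 2 ^ n"
proof -
  have "\<not> n \<le> n - 1 - k" using assms by simp
  then have "take_bit n (flip_bit (n - 1 - k) x) = flip_bit (n - 1 - k) x"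
    using assms by (simp only: take_bit_flip_bit_eq if_False take_bit_nat_eq_self)
  then show ?thesis by (metis flipq_eq_flip_bit take_bit_nat_less_exp)
qed

lemma qbit_flipq:
  assumes "k < n" "k' < n"
  shows "qbit n k' (flipq n k x) = (if k' = k then 1 - qbit n k x else qbit n k' x)"
  using assms by (auto simp: qbit_eq_bit flipq_eq_flip_bit bit_flip_bit_iff)

lemma qbit_zero [simp]: "qbit n k 0 = 0"
  by (simp add: qbit_def)

lemma qbit_shift:
  assumes "k < m"
  shows "qbit (Suc (Suc m)) (Suc (Suc k)) x = qbit m k (x mod 2 ^ m)"
  using assms by (simp add: qbit_eq_bit take_bit_eq_mod[symmetric] bit_take_bit_iff)

lemma qbit_first:
  assumes "x < 2 ^ Suc (Suc m)"
  shows "qbit (Suc (Suc m)) 0 x = x div 2 ^ m div 2"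
proof -
  have "x div 2 ^ m < 4" using assms by (simp add: less_mult_imp_div_less)
  moreover have "x div 2 ^ Suc m = x div 2 ^ m div 2" by (metis div_mult2_eq power_Suc2)
  ultimately show ?thesis by (simp add: qbit_def)
qed

lemma qbit_second: "qbit (Suc (Suc m)) 1 x = x div 2 ^ m mod 2"
  by (simp add: qbit_def)

lemma flipq_shift:
  assumes "k < m"
  shows "flipq (Suc (Suc m)) (Suc (Suc k)) x = x div 2 ^ m * 2 ^ m + flipq m k (x mod 2 ^ m)"
proof -
  have x: "x = x div 2 ^ m * 2 ^ m + x mod 2 ^ m" by (rule div_mult_mod_eq[symmetric])
  have e: "Suc (Suc m) - 1 - Suc (Suc k) = m - 1 - k" by simp
  show ?thesis
  proof (cases "qbit m k (x mod 2 ^ m) = 0")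
    case True
    then show ?thesis unfolding flipq_def qbit_shift[OF assms] e by (subst x) simp
  next
    case False
    then have "2 ^ (m - 1 - k) \<le> x mod 2 ^ m"
      by (metis div_less qbit_def mod_0 not_le)
    with False show ?thesis unfolding flipq_def qbit_shift[OF assms] e by (subst (1) x) simp
  qed
qed

lemma flipq_flipq [simp]: "flipq n k (flipq n k x) = x"
  by (simp add: flipq_eq_flip_bit) (auto intro: bit_eqI simp: bit_flip_bit_iff)

section \<open>Controlled flips of an ancilla\<close>

(* diag4 P projects onto the span of the system basis states |s>, s = 2 b_1 + b_2, with P s. *)
definition diag4 :: "(nat \<Rightarrow> bool) \<Rightarrow> complex mat" where
  "diag4 P = mat 4 4 (\<lambda>(i, j). if i = j \<and> P i then 1 else 0)"

definition flip_mat :: "nat \<Rightarrow> nat \<Rightarrow> complex mat" where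
  "flip_mat m k = mat (2 ^ m) (2 ^ m) (\<lambda>(i, j). if i = flipq m k j then 1 else 0)"

definition basis_col :: "nat \<Rightarrow> nat \<Rightarrow> complex mat" where
  "basis_col m x = mat (2 ^ m) (2 ^ m) (\<lambda>(i, j). if i = x \<and> j = 0 then 1 else 0)"

lemma dim_register_mats [simp]:
  "dim_row (diag4 P) = 4" "dim_col (diag4 P) = 4"
  "dim_row (flip_mat m k) = 2 ^ m" "dim_col (flip_mat m k) = 2 ^ m"
  "dim_row (basis_col m x) = 2 ^ m" "dim_col (basis_col m x) = 2 ^ m"
  "dim_row (proj0q m k) = 2 ^ m" "dim_col (proj0q m k) = 2 ^ m"
  by (simp_all add: diag4_def flip_mat_def basis_col_def proj0q_def)

lemma diag4_carrier [simp]: "diag4 P \<in> carrier_mat 4 4"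
  by (rule carrier_matI) (simp_all add: diag4_def)

lemma proj_zeros_eq_basis_col: "proj_zeros m = basis_col m 0"
  by (simp add: proj_zeros_def basis_col_def)

lemma dim_pauliX [simp]: "dim_row pauliX = 2" "dim_col pauliX = 2"
  by (simp_all add: pauliX_def mat_of_rows_list_def)

lemma dim_dagger [simp]: "dim_row (dagger A) = dim_col A" "dim_col (dagger A) = dim_row A"
  by (simp_all add: dagger_def)

lemma dagger_carrier [simp]: "R \<in> carrier_mat a b \<Longrightarrow> dagger R \<in> carrier_mat b a"
  by (rule carrier_matI) (auto simp: dagger_def)

lemma controlled_flip_split:
  assumes km: "k < m" and C: "\<And>j. j < 2 ^ Suc (Suc m) \<Longrightarrow> C j \<longleftrightarrow> P (j div 2 ^ m)"
  shows "mat (2 ^ Suc (Suc m)) (2 ^ Suc (Suc m))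
      (\<lambda>(i, j). if i = (if C j then flipq (Suc (Suc m)) (Suc (Suc k)) j else j) then 1 else 0)
    = kron (diag4 (\<lambda>s. \<not> P s)) (1\<^sub>m (2 ^ m)) + kron (diag4 P) (flip_mat m k)"
    (is "?L = ?R")
proof (rule eq_matI)
  fix i j assume "i < dim_row ?R" "j < dim_col ?R"
  then have i: "i < 4 * 2 ^ m" and j: "j < 4 * 2 ^ m" by simp_all
  let ?N = "2 ^ m :: nat"
  have fl: "flipq m k (j mod ?N) < ?N" using flipq_less[OF _ km] by simp
  have "i div ?N < 4" "j div ?N < 4" using i j by (auto simp: less_mult_imp_div_less)
  then have R: "?R $$ (i, j) =
      (if i div ?N = j div ?N \<and> \<not> P (j div ?N) \<and> i mod ?N = j mod ?N then 1 else 0)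
    + (if i div ?N = j div ?N \<and> P (j div ?N) \<and> i mod ?N = flipq m k (j mod ?N) then 1 else 0)"
    using i j by (auto simp: index_kron diag4_def flip_mat_def)
  have same: "(i = j) \<longleftrightarrow> (i div ?N = j div ?N \<and> i mod ?N = j mod ?N)"
    by (metis div_mult_mod_eq)
  have flipped: "(i = j div ?N * ?N + f) \<longleftrightarrow> (i div ?N = j div ?N \<and> i mod ?N = f)" if "f < ?N" for f
  proof
    assume "i div ?N = j div ?N \<and> i mod ?N = f"
    then show "i = j div ?N * ?N + f" by (metis div_mult_mod_eq)
  qed (use that in simp)
  have jn: "j < 2 ^ Suc (Suc m)" using j by simp
  show "?L $$ (i, j) = ?R $$ (i, j)"
  proof (cases "P (j div ?N)")
    case True
    then have "?L $$ (i, j) = (if i = j div ?N * ?N + flipq m k (j mod ?N) then 1 else 0)"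
      using C[OF jn] i j flipq_shift[OF km, of j] by simp
    then show ?thesis unfolding R using True flipped[OF fl] by auto
  next
    case False
    then have "?L $$ (i, j) = (if i = j then 1 else 0)"
      using C[OF jn] i j by simp
    then show ?thesis unfolding R using False same by auto
  qed
qed simp_all

lemma toffoli_split:
  assumes "k < m"
  shows "toffoli (Suc (Suc m)) 0 1 (Suc (Suc k))
    = kron (diag4 (\<lambda>s. s \<noteq> 3)) (1\<^sub>m (2 ^ m)) + kron (diag4 (\<lambda>s. s = 3)) (flip_mat m k)"
  unfolding toffoli_def
proof (rule controlled_flip_split[OF assms])
  fix j :: nat assume j: "j < 2 ^ Suc (Suc m)"
  then have "j div 2 ^ m < 4" by (simp add: less_mult_imp_div_less)
  then have "j div 2 ^ m \<in> {0, 1, 2, 3}" by auto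
  then show "(qbit (Suc (Suc m)) 0 j = 1 \<and> qbit (Suc (Suc m)) 1 j = 1) \<longleftrightarrow> j div 2 ^ m = 3"
    unfolding qbit_first[OF j] qbit_second by auto
qed

lemma cnot_first_split:
  assumes "k < m"
  shows "cnot (Suc (Suc m)) 0 (Suc (Suc k))
    = kron (diag4 (\<lambda>s. s div 2 \<noteq> 1)) (1\<^sub>m (2 ^ m)) + kron (diag4 (\<lambda>s. s div 2 = 1)) (flip_mat m k)"
  unfolding cnot_def by (rule controlled_flip_split[OF assms]) (simp add: qbit_first)

lemma cnot_second_split:
  assumes "k < m"
  shows "cnot (Suc (Suc m)) 1 (Suc (Suc k))
    = kron (diag4 (\<lambda>s. s mod 2 \<noteq> 1)) (1\<^sub>m (2 ^ m)) + kron (diag4 (\<lambda>s. s mod 2 = 1)) (flip_mat m k)"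
  unfolding cnot_def by (rule controlled_flip_split[OF assms]) (simp only: qbit_second)

lemma proj0q_split:
  assumes "k < m"
  shows "proj0q (Suc (Suc m)) (Suc (Suc k)) = kron (1\<^sub>m 4) (proj0q m k)" (is "?L = ?R")
proof (rule eq_matI)
  fix i j assume "i < dim_row ?R" "j < dim_col ?R"
  then have i: "i < 4 * 2 ^ m" and j: "j < 4 * 2 ^ m" by simp_all
  have "(i = j) \<longleftrightarrow> (i div 2 ^ m = j div 2 ^ m \<and> i mod 2 ^ m = j mod 2 ^ m)"
    by (metis div_mult_mod_eq)
  with i j show "?L $$ (i, j) = ?R $$ (i, j)"
    by (auto simp: index_kron proj0q_def qbit_shift[OF assms] less_mult_imp_div_less)
qed (simp_all add: proj0q_def)

lemma flip_mat_mult_basis_col: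
  assumes "x < 2 ^ m" "k < m"
  shows "flip_mat m k * basis_col m x = basis_col m (flipq m k x)" (is "?L = ?R")
proof (rule eq_matI)
  fix i j assume ij: "i < dim_row ?R" "j < dim_col ?R"
  then have "?L $$ (i, j) = (\<Sum>l<2 ^ m. (if i = flipq m k l then 1 else 0) * (if l = x \<and> j = 0 then 1 else 0))"
    by (simp add: flip_mat_def basis_col_def scalar_prod_def atLeast0LessThan)
  also have "\<dots> = (\<Sum>l<2 ^ m. if l = x then (if i = flipq m k x \<and> j = 0 then 1 else 0) else 0)"
    by (intro sum.cong) auto
  also have "\<dots> = ?R $$ (i, j)" using assms ij by (simp add: basis_col_def)
  finally show "?L $$ (i, j) = ?R $$ (i, j)" .
qed simp_all

lemma proj0q_mult_basis_col:
  assumes "x < 2 ^ m"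
  shows "proj0q m k * basis_col m x = (if qbit m k x = 0 then basis_col m x else 0\<^sub>m (2 ^ m) (2 ^ m))"
    (is "?L = ?R")
proof (rule eq_matI)
  fix i j assume "i < dim_row ?R" "j < dim_col ?R"
  then have ij: "i < 2 ^ m" "j < 2 ^ m" by (auto split: if_splits)
  then have "?L $$ (i, j) = (\<Sum>l<2 ^ m. (if i = l \<and> qbit m k l = 0 then 1 else 0) * (if l = x \<and> j = 0 then 1 else 0))"
    by (simp add: proj0q_def basis_col_def scalar_prod_def atLeast0LessThan)
  also have "\<dots> = (\<Sum>l<2 ^ m. if l = x then (if i = x \<and> qbit m k x = 0 \<and> j = 0 then 1 else 0) else 0)"
    by (intro sum.cong) auto
  also have "\<dots> = ?R $$ (i, j)" using assms ij by (simp add: basis_col_def)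
  finally show "?L $$ (i, j) = ?R $$ (i, j)" .
qed simp_all

lemmas register_simps = assoc_mult_dim mult_add_distrib_dim add_mult_distrib_dim minus_mult_distrib_dim
  kron_mult kron_add_left[symmetric] kron_zero_right flip_mat_mult_basis_col proj0q_mult_basis_col
  left_mult_one_dim right_add_zero_dim left_add_zero_dim

lemma Mt_mult_kron_zeros:
  assumes km: "k < m" and R: "R \<in> carrier_mat 4 4" and \<sigma>: "\<sigma> \<in> carrier_mat 4 4"
  shows "Mt (Suc (Suc m)) R (Suc (Suc k)) * kron \<sigma> (proj_zeros m)
    = kron (dagger R * (kron pauliX pauliX * (diag4 (\<lambda>s. s \<noteq> 3) * (kron pauliX pauliX * (R * \<sigma>))))) (proj_zeros m)"
proof -
  have "flipq m k 0 < 2 ^ m" using flipq_less[OF _ km] by simp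
  moreover have "qbit m k (flipq m k 0) = 1" using qbit_flipq[OF km km] by simp
  ultimately show ?thesis
    unfolding Mt_def toffoli_split[OF km] proj0q_split[OF km] proj_zeros_eq_basis_col onsys_def
    using carrier_matD[OF R] carrier_matD[OF \<sigma>] km by (simp add: register_simps)
qed

lemma M1_mult_kron_zeros:
  assumes km: "k < m" and \<tau>: "\<tau> \<in> carrier_mat 4 4"
  shows "M1 (Suc (Suc m)) (Suc (Suc k)) * kron \<tau> (proj_zeros m)
    = kron (diag4 (\<lambda>s. s div 2 \<noteq> 1) * (diag4 (\<lambda>s. s mod 2 \<noteq> 1) * \<tau>)
          + diag4 (\<lambda>s. s div 2 = 1) * (diag4 (\<lambda>s. s mod 2 = 1) * \<tau>)) (proj_zeros m)"
proof -
  have "flipq m k 0 < 2 ^ m" using flipq_less[OF _ km] by simp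
  moreover have "qbit m k (flipq m k 0) = 1" using qbit_flipq[OF km km] by simp
  ultimately show ?thesis
    unfolding M1_def cnot_first_split[OF km] cnot_second_split[OF km] proj0q_split[OF km] proj_zeros_eq_basis_col
    using carrier_matD[OF \<tau>] km by (simp add: register_simps)
qed

lemma Mb_mult_kron_zeros:
  assumes km: "k < m" and km': "k' < m" and kk': "k \<noteq> k'"
    and R: "R \<in> carrier_mat 4 4" and \<sigma>: "\<sigma> \<in> carrier_mat 4 4"
  shows "Mb (Suc (Suc m)) R (Suc (Suc k)) (Suc (Suc k')) * kron \<sigma> (proj_zeros m)
    = kron \<sigma> (proj_zeros m)
      - kron (dagger R * (diag4 (\<lambda>s. s div 2 \<noteq> 1) * (diag4 (\<lambda>s. s mod 2 \<noteq> 1) * (R * \<sigma>)))) (proj_zeros m)"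
proof -
  have "flipq m k 0 < 2 ^ m" "flipq m k' 0 < 2 ^ m" "flipq m k (flipq m k' 0) < 2 ^ m"
    using flipq_less km km' by simp_all
  moreover have "qbit m k (flipq m k 0) = 1" "qbit m k' (flipq m k' 0) = 1"
      "qbit m k (flipq m k' 0) = 0" "qbit m k' (flipq m k 0) = 0"
      "qbit m k' (flipq m k (flipq m k' 0)) = 1"
    using qbit_flipq km km' kk' by simp_all
  ultimately show ?thesis
    unfolding Mb_def cnot_first_split[OF km] cnot_second_split[OF km'] proj0q_split[OF km] proj0q_split[OF km']
      proj_zeros_eq_basis_col onsys_def
    using carrier_matD[OF R] carrier_matD[OF \<sigma>] km km' by (simp add: register_simps)
qed

lemma index_mult_mat4:
  "i < dim_row A \<Longrightarrow> j < dim_col B \<Longrightarrow> dim_col A = 4 \<Longrightarrow> dim_row B = 4 \<Longrightarrow>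
   (A * B) $$ (i, j) = A $$ (i, 0) * B $$ (0, j) + A $$ (i, 1) * B $$ (1, j)
     + A $$ (i, 2) * B $$ (2, j) + A $$ (i, 3) * B $$ (3, j)"
  by (simp add: scalar_prod_def eval_nat_numeral)

lemma index_mult_mat2:
  "i < dim_row A \<Longrightarrow> j < dim_col B \<Longrightarrow> dim_col A = 2 \<Longrightarrow> dim_row B = 2 \<Longrightarrow>
   (A * B) $$ (i, j) = A $$ (i, 0) * B $$ (0, j) + A $$ (i, 1) * B $$ (1, j)"
  by (simp add: scalar_prod_def eval_nat_numeral)

lemma mat_of_rows_list_2x2 [simp]:
  "dim_row (mat_of_rows_list 2 [[a, b], [c, d]]) = 2" "dim_col (mat_of_rows_list 2 [[a, b], [c, d]]) = 2"
  "mat_of_rows_list 2 [[a, b], [c, d]] $$ (0, 0) = a" "mat_of_rows_list 2 [[a, b], [c, d]] $$ (0, 1) = b"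
  "mat_of_rows_list 2 [[a, b], [c, d]] $$ (1, 0) = c" "mat_of_rows_list 2 [[a, b], [c, d]] $$ (1, 1) = d"
  "mat_of_rows_list 2 [[a, b], [c, d]] $$ (0, Suc 0) = b" "mat_of_rows_list 2 [[a, b], [c, d]] $$ (Suc 0, 0) = c"
  "mat_of_rows_list 2 [[a, b], [c, d]] $$ (Suc 0, Suc 0) = d"
  by (simp_all add: mat_of_rows_list_def)

lemma less_4_cases: "(i :: nat) < 4 \<Longrightarrow> i = 0 \<or> i = 1 \<or> i = 2 \<or> i = 3"
  by arith

lemma diag4_mult: "diag4 P * diag4 Q = diag4 (\<lambda>s. P s \<and> Q s)"
proof (rule eq_matI)
  fix i j assume "i < dim_row (diag4 (\<lambda>s. P s \<and> Q s))" "j < dim_col (diag4 (\<lambda>s. P s \<and> Q s))"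
  then have "i < 4" "j < 4" by simp_all
  then show "(diag4 P * diag4 Q) $$ (i, j) = diag4 (\<lambda>s. P s \<and> Q s) $$ (i, j)"
    using less_4_cases by (auto simp: index_mult_mat4 diag4_def simp del: index_mult_mat(1))
qed simp_all

lemma diag4_add: "(\<And>s. \<not> (P s \<and> Q s)) \<Longrightarrow> diag4 P + diag4 Q = diag4 (\<lambda>s. P s \<or> Q s)"
  by (rule eq_matI) (auto simp: diag4_def)

lemma diag4_cong: "(\<And>s. s < 4 \<Longrightarrow> P s \<longleftrightarrow> Q s) \<Longrightarrow> diag4 P = diag4 Q"
  by (rule eq_matI) (auto simp: diag4_def)

lemma diag4_not: "diag4 (\<lambda>s. \<not> P s) = 1\<^sub>m 4 - diag4 P"
  by (rule eq_matI) (auto simp: diag4_def)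

lemma kron_pauliX_pauliX: "kron pauliX pauliX = mat 4 4 (\<lambda>(i, j). if i + j = 3 then 1 else 0)"
proof (rule eq_matI)
  fix i j assume "i < dim_row (mat 4 4 (\<lambda>(i, j). if i + j = 3 then 1 else (0 :: complex)))"
    "j < dim_col (mat 4 4 (\<lambda>(i, j). if i + j = 3 then 1 else (0 :: complex)))"
  then have "i < 4" "j < 4" by simp_all
  then show "kron pauliX pauliX $$ (i, j) = mat 4 4 (\<lambda>(i, j). if i + j = 3 then 1 else 0) $$ (i, j)"
    using less_4_cases[of i] less_4_cases[of j]
    by (auto simp: index_kron pauliX_def)
qed simp_all

lemma pauliX_pauliX_conj_diag4: "kron pauliX pauliX * diag4 P * kron pauliX pauliX = diag4 (\<lambda>s. P (3 - s))"
proof (rule eq_matI)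
  fix i j assume "i < dim_row (diag4 (\<lambda>s. P (3 - s)))" "j < dim_col (diag4 (\<lambda>s. P (3 - s)))"
  then have "i < 4" "j < 4" by simp_all
  then show "(kron pauliX pauliX * diag4 P * kron pauliX pauliX) $$ (i, j) = diag4 (\<lambda>s. P (3 - s)) $$ (i, j)"
    using less_4_cases[of i] less_4_cases[of j] unfolding kron_pauliX_pauliX
    by (auto simp: index_mult_mat4 diag4_def simp del: index_mult_mat(1))
qed simp_all

lemma pauliX_conj_toffoli_control:
  assumes "M \<in> carrier_mat 4 n"
  shows "kron pauliX pauliX * (diag4 (\<lambda>s. s \<noteq> 3) * (kron pauliX pauliX * M)) = M - diag4 (\<lambda>s. s = 0) * M"
proof -
  have "diag4 (\<lambda>s. 3 - s \<noteq> 3) = 1\<^sub>m 4 - diag4 (\<lambda>s. s = 0)"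
    unfolding diag4_not[symmetric] by (rule diag4_cong) auto
  then have conj: "kron pauliX pauliX * diag4 (\<lambda>s. s \<noteq> 3) * kron pauliX pauliX = 1\<^sub>m 4 - diag4 (\<lambda>s. s = 0)"
    by (simp only: pauliX_pauliX_conj_diag4)
  have "kron pauliX pauliX * (diag4 (\<lambda>s. s \<noteq> 3) * (kron pauliX pauliX * M))
      = (kron pauliX pauliX * diag4 (\<lambda>s. s \<noteq> 3) * kron pauliX pauliX) * M"
    using carrier_matD[OF assms] by (simp add: assoc_mult_dim)
  also have "\<dots> = M - diag4 (\<lambda>s. s = 0) * M"
    unfolding conj using carrier_matD[OF assms] by (simp add: register_simps)
  finally show ?thesis .
qed

lemma ket_index [simp]:
  "dim_vec ket0 = 2" "dim_vec ket1 = 2" "dim_vec ketp = 2" "dim_vec ketm = 2"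
  "ket0 $ 0 = 1" "ket0 $ 1 = 0" "ket1 $ 0 = 0" "ket1 $ 1 = 1"
  "ketp $ 0 = 1 / sqrt 2" "ketp $ 1 = 1 / sqrt 2" "ketm $ 0 = 1 / sqrt 2" "ketm $ 1 = - 1 / sqrt 2"
  "ket0 $ Suc 0 = 0" "ket1 $ Suc 0 = 1" "ketp $ Suc 0 = 1 / sqrt 2" "ketm $ Suc 0 = - 1 / sqrt 2"
  by (simp_all add: ket0_def ket1_def ketp_def ketm_def)

lemma Omega1_eq_diag4: "Omega1 = diag4 (\<lambda>s. s = 0 \<or> s = 3)"
proof (rule eq_matI)
  fix i j assume "i < dim_row (diag4 (\<lambda>s. s = 0 \<or> s = 3))" "j < dim_col (diag4 (\<lambda>s. s = 0 \<or> s = 3))"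
  then have "i < 4" "j < 4" by simp_all
  then show "Omega1 $$ (i, j) = diag4 (\<lambda>s. s = 0 \<or> s = 3) $$ (i, j)"
    using less_4_cases[of i] less_4_cases[of j] by (auto simp: Omega1_def outer_def vkron_def diag4_def)
qed (simp_all add: Omega1_def outer_def vkron_def)

section \<open>Action of the filters\<close>

definition Omega_rot :: "complex mat \<Rightarrow> complex mat" where
  "Omega_rot R = 1\<^sub>m 4 - dagger R * (diag4 (\<lambda>s. s = 0) * R)"

lemma Omega_rot_carrier: "R \<in> carrier_mat 4 4 \<Longrightarrow> Omega_rot R \<in> carrier_mat 4 4"
  by (rule carrier_matI) (auto simp: Omega_rot_def)

lemma Omega_rot_mult:
  assumes "R \<in> carrier_mat 4 4" "\<sigma> \<in> carrier_mat 4 4"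
  shows "Omega_rot R * \<sigma> = \<sigma> - dagger R * (diag4 (\<lambda>s. s = 0) * (R * \<sigma>))"
  using carrier_matD[OF assms(1)] carrier_matD[OF assms(2)]
  by (simp add: Omega_rot_def register_simps)

lemma ancilla_index_cases:
  assumes "2 \<le> a" "a < n"
  obtains m k where "n = Suc (Suc m)" "a = Suc (Suc k)" "k < m"
proof
  show "n = Suc (Suc (n - 2))" "a = Suc (Suc (a - 2))" "a - 2 < n - 2" using assms by simp_all
qed

lemma Mt_action:
  assumes "2 \<le> a" "a < n"
    and R: "R \<in> carrier_mat 4 4" "dagger R * R = 1\<^sub>m 4" and \<sigma>: "\<sigma> \<in> carrier_mat 4 4"
  shows "Mt n R a * kron \<sigma> (proj_zeros (n - 2)) = kron (Omega_rot R * \<sigma>) (proj_zeros (n - 2))"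
proof -
  obtain m k where n: "n = Suc (Suc m)" and a: "a = Suc (Suc k)" and km: "k < m"
    using ancilla_index_cases[OF assms(1,2)] .
  have R\<sigma>: "R * \<sigma> \<in> carrier_mat 4 4" using R \<sigma> by simp
  have "dagger R * (kron pauliX pauliX * (diag4 (\<lambda>s. s \<noteq> 3) * (kron pauliX pauliX * (R * \<sigma>))))
      = dagger R * (R * \<sigma>) - dagger R * (diag4 (\<lambda>s. s = 0) * (R * \<sigma>))"
    unfolding pauliX_conj_toffoli_control[OF R\<sigma>] by (rule mult_minus_distrib_mat[OF dagger_carrier[OF R(1)] R\<sigma> mult_carrier_mat[OF diag4_carrier R\<sigma>]])
  also have "\<dots> = Omega_rot R * \<sigma>"
    using R \<sigma> by (simp add: Omega_rot_mult assoc_mult_mat[of _ 4 4 _ 4 _ 4, symmetric])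
  finally show ?thesis
    unfolding n a using Mt_mult_kron_zeros[OF km R(1) \<sigma>] by simp
qed

lemma Mb_action:
  assumes "2 \<le> a" "a < n" "2 \<le> a'" "a' < n" "a \<noteq> a'"
    and R: "R \<in> carrier_mat 4 4" and \<sigma>: "\<sigma> \<in> carrier_mat 4 4"
  shows "Mb n R a a' * kron \<sigma> (proj_zeros (n - 2)) = kron (Omega_rot R * \<sigma>) (proj_zeros (n - 2))"
proof -
  obtain m k where n: "n = Suc (Suc m)" and a: "a = Suc (Suc k)" and km: "k < m"
    using ancilla_index_cases[OF assms(1,2)] .
  obtain k' where a': "a' = Suc (Suc k')" and km': "k' < m"
    using ancilla_index_cases[OF assms(3,4)] n by (metis Suc_inject)
  have kk': "k \<noteq> k'" using a a' assms(5) by simp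
  have R\<sigma>: "R * \<sigma> \<in> carrier_mat 4 4" using R \<sigma> by simp
  have "diag4 (\<lambda>s. s div 2 \<noteq> 1) * diag4 (\<lambda>s. s mod 2 \<noteq> 1) = diag4 (\<lambda>s. s = 0)"
    unfolding diag4_mult by (rule diag4_cong) auto
  then have "diag4 (\<lambda>s. s div 2 \<noteq> 1) * (diag4 (\<lambda>s. s mod 2 \<noteq> 1) * (R * \<sigma>)) = diag4 (\<lambda>s. s = 0) * (R * \<sigma>)"
    using carrier_matD[OF R\<sigma>] by (simp add: assoc_mult_dim[symmetric])
  then show ?thesis
    unfolding n a a' Omega_rot_mult[OF R \<sigma>] using Mb_mult_kron_zeros[OF km km' kk' R \<sigma>] R \<sigma>
    by (simp add: kron_minus_left)
qed

lemma M1_action: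
  assumes "2 \<le> a" "a < n" and \<tau>: "\<tau> \<in> carrier_mat 4 4"
  shows "M1 n a * kron \<tau> (proj_zeros (n - 2)) = kron (Omega1 * \<tau>) (proj_zeros (n - 2))"
proof -
  obtain m k where n: "n = Suc (Suc m)" and a: "a = Suc (Suc k)" and km: "k < m"
    using ancilla_index_cases[OF assms(1,2)] .
  have parity: "diag4 (\<lambda>s. s div 2 \<noteq> 1) * diag4 (\<lambda>s. s mod 2 \<noteq> 1) + diag4 (\<lambda>s. s div 2 = 1) * diag4 (\<lambda>s. s mod 2 = 1)
      = Omega1"
  proof -
    have "diag4 (\<lambda>s. s div 2 \<noteq> 1) * diag4 (\<lambda>s. s mod 2 \<noteq> 1) = diag4 (\<lambda>s. s = 0)"
      unfolding diag4_mult by (rule diag4_cong) auto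
    moreover have "diag4 (\<lambda>s. s div 2 = 1) * diag4 (\<lambda>s. s mod 2 = 1) = diag4 (\<lambda>s. s = 3)"
      unfolding diag4_mult by (rule diag4_cong) (auto dest: less_4_cases)
    moreover have "diag4 (\<lambda>s. s = 0) + diag4 (\<lambda>s. s = 3) = Omega1"
      unfolding Omega1_eq_diag4 by (rule diag4_add) auto
    ultimately show ?thesis by simp
  qed
  have "diag4 (\<lambda>s. s div 2 \<noteq> 1) * (diag4 (\<lambda>s. s mod 2 \<noteq> 1) * \<tau>)
      + diag4 (\<lambda>s. s div 2 = 1) * (diag4 (\<lambda>s. s mod 2 = 1) * \<tau>)
      = (diag4 (\<lambda>s. s div 2 \<noteq> 1) * diag4 (\<lambda>s. s mod 2 \<noteq> 1) + diag4 (\<lambda>s. s div 2 = 1) * diag4 (\<lambda>s. s mod 2 = 1)) * \<tau>"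
    using carrier_matD[OF \<tau>] by (simp add: register_simps)
  then have "diag4 (\<lambda>s. s div 2 \<noteq> 1) * (diag4 (\<lambda>s. s mod 2 \<noteq> 1) * \<tau>)
      + diag4 (\<lambda>s. s div 2 = 1) * (diag4 (\<lambda>s. s mod 2 = 1) * \<tau>) = Omega1 * \<tau>"
    by (simp only: parity)
  then show ?thesis unfolding n a using M1_mult_kron_zeros[OF km \<tau>] by simp
qed

section \<open>The rotations R_2 and R_3\<close>

lemma of_real_sqrt2_mult_self: "complex_of_real (sqrt 2) * complex_of_real (sqrt 2) = 2"
  by (simp flip: of_real_mult)

lemma cos_sin_complex_squared:
  "complex_of_real (cos x) * complex_of_real (cos x) + complex_of_real (sin x) * complex_of_real (sin x) = 1"
  "complex_of_real (sin x) * complex_of_real (sin x) + complex_of_real (cos x) * complex_of_real (cos x) = 1"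
proof -
  show "complex_of_real (cos x) * complex_of_real (cos x) + complex_of_real (sin x) * complex_of_real (sin x) = 1"
    by (simp flip: of_real_mult of_real_add add: sin_cos_squared_add3)
  then show "complex_of_real (sin x) * complex_of_real (sin x) + complex_of_real (cos x) * complex_of_real (cos x) = 1"
    by (simp only: add.commute)
qed

lemma cos_sin_complex_squared_mult:
  "complex_of_real (cos x) * (complex_of_real (cos x) * z) + complex_of_real (sin x) * (complex_of_real (sin x) * z) = z"
proof -
  have "complex_of_real (cos x) * (complex_of_real (cos x) * z) + complex_of_real (sin x) * (complex_of_real (sin x) * z)
      = z * (complex_of_real (cos x) * complex_of_real (cos x) + complex_of_real (sin x) * complex_of_real (sin x))"
    by (simp add: algebra_simps)
  then show ?thesis by (simp only: cos_sin_complex_squared mult_1_right)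
qed

lemma dim_rotations [simp]:
  "dim_row (R2 \<theta>) = 4" "dim_col (R2 \<theta>) = 4" "dim_row (R3 \<theta>) = 4" "dim_col (R3 \<theta>) = 4"
  "dim_row hadamard = 2" "dim_col hadamard = 2" "dim_row (rotm \<theta>) = 2" "dim_col (rotm \<theta>) = 2"
  by (simp_all add: R2_def R3_def hadamard_def rotm_def mat_of_rows_list_def)

lemma R2_carrier: "R2 \<theta> \<in> carrier_mat 4 4" and R3_carrier: "R3 \<theta> \<in> carrier_mat 4 4"
  by (simp_all add: carrier_matI)

lemmas rotation_entries = index_mult_mat4 index_mult_mat2 diag4_def dagger_def R2_def R3_def index_kron
  hadamard_def rotm_def pauliX_def outer_def cos_of_real sin_of_real

lemma R2_unitary: "dagger (R2 \<theta>) * R2 \<theta> = 1\<^sub>m 4"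
proof (rule eq_matI)
  fix i j assume "i < dim_row (1\<^sub>m 4 :: complex mat)" "j < dim_col (1\<^sub>m 4 :: complex mat)"
  then have i: "i < 4" and j: "j < 4" by simp_all
  show "(dagger (R2 \<theta>) * R2 \<theta>) $$ (i, j) = (1\<^sub>m 4 :: complex mat) $$ (i, j)"
    using less_4_cases[OF i] less_4_cases[OF j]
    apply (elim disjE)
    apply (simp_all del: index_mult_mat(1) add: rotation_entries)
    apply (simp_all add: of_real_sqrt2_mult_self field_simps)
    apply (simp_all only: cos_sin_complex_squared_mult cos_sin_complex_squared)
    done
qed simp_all

lemma R3_unitary: "dagger (R3 \<theta>) * R3 \<theta> = 1\<^sub>m 4"
proof (rule eq_matI)
  fix i j assume "i < dim_row (1\<^sub>m 4 :: complex mat)" "j < dim_col (1\<^sub>m 4 :: complex mat)"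
  then have i: "i < 4" and j: "j < 4" by simp_all
  show "(dagger (R3 \<theta>) * R3 \<theta>) $$ (i, j) = (1\<^sub>m 4 :: complex mat) $$ (i, j)"
    using less_4_cases[OF i] less_4_cases[OF j]
    apply (elim disjE)
    apply (simp_all del: index_mult_mat(1) add: rotation_entries)
    apply (simp_all add: of_real_sqrt2_mult_self field_simps)
    apply (simp_all only: cos_sin_complex_squared_mult cos_sin_complex_squared)
    done
qed simp_all

lemma phi_index [simp]:
  "dim_vec (phip \<theta>) = 2" "dim_vec (phim \<theta>) = 2"
  "phip \<theta> $ 0 = complex_of_real (cos \<theta>)" "phip \<theta> $ 1 = - complex_of_real (sin \<theta>)"
  "phip \<theta> $ Suc 0 = - complex_of_real (sin \<theta>)"
  "phim \<theta> $ 0 = complex_of_real (cos \<theta>)" "phim \<theta> $ 1 = complex_of_real (sin \<theta>)"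
  "phim \<theta> $ Suc 0 = complex_of_real (sin \<theta>)"
  by (simp_all add: phip_def phim_def cos_of_real sin_of_real)

lemma Psi_index [simp]:
  "dim_vec (Psi \<theta>) = 4" "Psi \<theta> $ 0 = complex_of_real (sin \<theta>)" "Psi \<theta> $ Suc 0 = 0" "Psi \<theta> $ 2 = 0"
  "Psi \<theta> $ 3 = complex_of_real (cos \<theta>)"
  by (simp_all add: Psi_def vkron_def cos_of_real sin_of_real)

lemma R2_rejected_state:
  "dagger (R2 \<theta>) * (diag4 (\<lambda>s. s = 0) * R2 \<theta>) = kron (outer ketp ketp) (outer (phip \<theta>) (phip \<theta>))"
    (is "?L = ?R")
proof (rule eq_matI)
  fix i j assume "i < dim_row ?R" "j < dim_col ?R"
  then have i: "i < 4" and j: "j < 4" by (simp_all add: outer_def)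
  show "?L $$ (i, j) = ?R $$ (i, j)"
    using less_4_cases[OF i] less_4_cases[OF j]
    by (elim disjE) (simp_all del: index_mult_mat(1) add: rotation_entries)
qed (simp_all add: outer_def)

lemma R3_rejected_state:
  "dagger (R3 \<theta>) * (diag4 (\<lambda>s. s = 0) * R3 \<theta>) = kron (outer ketm ketm) (outer (phim \<theta>) (phim \<theta>))"
    (is "?L = ?R")
proof (rule eq_matI)
  fix i j assume "i < dim_row ?R" "j < dim_col ?R"
  then have i: "i < 4" and j: "j < 4" by (simp_all add: outer_def)
  show "?L $$ (i, j) = ?R $$ (i, j)"
    using less_4_cases[OF i] less_4_cases[OF j]
    by (elim disjE) (simp_all del: index_mult_mat(1) add: rotation_entries)
qed (simp_all add: outer_def)

lemma Omega2_eq_Omega_rot: "Omega2 \<theta> = Omega_rot (R2 \<theta>)"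
  unfolding Omega2_def Omega_rot_def R2_rejected_state ..

lemma Omega3_eq_Omega_rot: "Omega3 \<theta> = Omega_rot (R3 \<theta>)"
  unfolding Omega3_def Omega_rot_def R3_rejected_state ..

lemma Omega_product: "Omega1 * Omega2 \<theta> * Omega3 \<theta> = outer (Psi \<theta>) (Psi \<theta>)"
proof (rule eq_matI)
  fix i j assume "i < dim_row (outer (Psi \<theta>) (Psi \<theta>))" "j < dim_col (outer (Psi \<theta>) (Psi \<theta>))"
  then have i: "i < 4" and j: "j < 4" by (simp_all add: outer_def)
  show "(Omega1 * Omega2 \<theta> * Omega3 \<theta>) $$ (i, j) = outer (Psi \<theta>) (Psi \<theta>) $$ (i, j)"
    using less_4_cases[OF i] less_4_cases[OF j]
    apply (elim disjE)
    apply (simp_all del: index_mult_mat(1)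
        add: index_mult_mat4 Omega1_def Omega2_def Omega3_def outer_def vkron_def index_kron)
    apply (simp_all only: cos_of_real sin_of_real complex_cnj_complex_of_real mult.commute)
    apply (simp_all add: of_real_sqrt2_mult_self)
    apply (simp_all add: field_simps)
    apply (simp_all only: cos_sin_complex_squared_mult)
    done
qed (simp_all add: outer_def Omega1_def vkron_def Omega3_def)

lemma dim_circuits [simp]:
  "dim_row (M1 n a) = 2 ^ n" "dim_col (M1 n a) = 2 ^ n"
  "dim_row (Mt n R a) = 2 ^ n" "dim_col (Mt n R a) = dim_col R * 2 ^ (n - 2)"
  "dim_row (Mb n R a a') = 2 ^ n" "dim_col (Mb n R a a') = dim_col R * 2 ^ (n - 2)"
  "dim_row (proj_zeros m) = 2 ^ m" "dim_col (proj_zeros m) = 2 ^ m"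
  by (simp_all add: M1_def Mt_def Mb_def cnot_def onsys_def proj_zeros_def)

lemma four_mult_power_diff: "2 \<le> n \<Longrightarrow> 4 * 2 ^ (n - 2) = (2 :: nat) ^ n"
  by (metis le_add_diff_inverse2 power_add power2_eq_square numeral_Bit0 mult.commute mult_2_right
      numeral_One one_add_one)

lemma M1_Mt_Mt_action:
  assumes "2 \<le> a1" "a1 < n" "2 \<le> a2" "a2 < n" "2 \<le> a3" "a3 < n"
    and R: "R \<in> carrier_mat 4 4" "dagger R * R = 1\<^sub>m 4"
    and R': "R' \<in> carrier_mat 4 4" "dagger R' * R' = 1\<^sub>m 4"
    and \<sigma>: "\<sigma> \<in> carrier_mat 4 4"
  shows "M1 n a1 * Mt n R a2 * Mt n R' a3 * kron \<sigma> (proj_zeros (n - 2))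
    = kron (Omega1 * (Omega_rot R * (Omega_rot R' * \<sigma>))) (proj_zeros (n - 2))"
proof -
  have R'\<sigma>: "Omega_rot R' * \<sigma> \<in> carrier_mat 4 4" and RR'\<sigma>: "Omega_rot R * (Omega_rot R' * \<sigma>) \<in> carrier_mat 4 4"
    using Omega_rot_carrier[OF R(1)] Omega_rot_carrier[OF R'(1)] \<sigma> by (blast intro: mult_carrier_mat)+
  have "M1 n a1 * Mt n R a2 * Mt n R' a3 * kron \<sigma> (proj_zeros (n - 2))
      = M1 n a1 * (Mt n R a2 * (Mt n R' a3 * kron \<sigma> (proj_zeros (n - 2))))"
    using carrier_matD[OF R(1)] carrier_matD[OF R'(1)] carrier_matD[OF \<sigma>] four_mult_power_diff[of n] assms(1,2)
    by (simp add: assoc_mult_dim)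
  also have "\<dots> = M1 n a1 * (Mt n R a2 * kron (Omega_rot R' * \<sigma>) (proj_zeros (n - 2)))"
    using Mt_action[OF assms(5,6) R' \<sigma>] by simp
  also have "\<dots> = M1 n a1 * kron (Omega_rot R * (Omega_rot R' * \<sigma>)) (proj_zeros (n - 2))"
    using Mt_action[OF assms(3,4) R R'\<sigma>] by simp
  also have "\<dots> = kron (Omega1 * (Omega_rot R * (Omega_rot R' * \<sigma>))) (proj_zeros (n - 2))"
    by (rule M1_action[OF assms(1,2) RR'\<sigma>])
  finally show ?thesis .
qed

lemma M1_Mb_Mb_action:
  assumes "2 \<le> a1" "a1 < n" "2 \<le> a2" "a2 < n" "2 \<le> a2'" "a2' < n" "a2 \<noteq> a2'"
    and "2 \<le> a3" "a3 < n" "2 \<le> a3'" "a3' < n" "a3 \<noteq> a3'"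
    and R: "R \<in> carrier_mat 4 4" and R': "R' \<in> carrier_mat 4 4" and \<sigma>: "\<sigma> \<in> carrier_mat 4 4"
  shows "M1 n a1 * Mb n R a2 a2' * Mb n R' a3 a3' * kron \<sigma> (proj_zeros (n - 2))
    = kron (Omega1 * (Omega_rot R * (Omega_rot R' * \<sigma>))) (proj_zeros (n - 2))"
proof -
  have R'\<sigma>: "Omega_rot R' * \<sigma> \<in> carrier_mat 4 4" and RR'\<sigma>: "Omega_rot R * (Omega_rot R' * \<sigma>) \<in> carrier_mat 4 4"
    using Omega_rot_carrier[OF R] Omega_rot_carrier[OF R'] \<sigma> by (blast intro: mult_carrier_mat)+
  have "M1 n a1 * Mb n R a2 a2' * Mb n R' a3 a3' * kron \<sigma> (proj_zeros (n - 2))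
      = M1 n a1 * (Mb n R a2 a2' * (Mb n R' a3 a3' * kron \<sigma> (proj_zeros (n - 2))))"
    using carrier_matD[OF R] carrier_matD[OF R'] carrier_matD[OF \<sigma>] four_mult_power_diff[of n] assms(1,2)
    by (simp add: assoc_mult_dim)
  also have "\<dots> = M1 n a1 * (Mb n R a2 a2' * kron (Omega_rot R' * \<sigma>) (proj_zeros (n - 2)))"
    using Mb_action[OF assms(8-12) R' \<sigma>] by simp
  also have "\<dots> = M1 n a1 * kron (Omega_rot R * (Omega_rot R' * \<sigma>)) (proj_zeros (n - 2))"
    using Mb_action[OF assms(3-7) R R'\<sigma>] by simp
  also have "\<dots> = kron (Omega1 * (Omega_rot R * (Omega_rot R' * \<sigma>))) (proj_zeros (n - 2))"
    by (rule M1_action[OF assms(1,2) RR'\<sigma>])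
  finally show ?thesis .
qed

theorem mainTheorem5:
  fixes \<theta> :: real
  assumes "0 < \<theta>" and "\<theta> < pi / 4"
  shows
    "(\<forall>\<sigma> \<in> carrier_mat 4 4.
        Mt 3 (R2 \<theta>) 2 * kron \<sigma> (proj_zeros 1) = kron (Omega2 \<theta> * \<sigma>) (proj_zeros 1)
      \<and> Mt 3 (R3 \<theta>) 2 * kron \<sigma> (proj_zeros 1) = kron (Omega3 \<theta> * \<sigma>) (proj_zeros 1))
   \<and> Omega1 * Omega2 \<theta> * Omega3 \<theta> = outer (Psi \<theta>) (Psi \<theta>)
   \<and> (\<forall>\<sigma> \<in> carrier_mat 4 4.
        M1 5 2 * Mt 5 (R2 \<theta>) 3 * Mt 5 (R3 \<theta>) 4 * kron \<sigma> (proj_zeros 3)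
          = kron (outer (Psi \<theta>) (Psi \<theta>) * \<sigma>) (proj_zeros 3))
   \<and> (\<forall>\<sigma> \<in> carrier_mat 4 4.
        Mb 4 (R2 \<theta>) 2 3 * kron \<sigma> (proj_zeros 2) = kron (Omega2 \<theta> * \<sigma>) (proj_zeros 2)
      \<and> Mb 4 (R3 \<theta>) 2 3 * kron \<sigma> (proj_zeros 2) = kron (Omega3 \<theta> * \<sigma>) (proj_zeros 2))
   \<and> (\<forall>\<sigma> \<in> carrier_mat 4 4.
        M1 7 2 * Mb 7 (R2 \<theta>) 3 4 * Mb 7 (R3 \<theta>) 5 6 * kron \<sigma> (proj_zeros 5)
          = kron (outer (Psi \<theta>) (Psi \<theta>) * \<sigma>) (proj_zeros 5))"
proof (intro conjI ballI)
  fix \<sigma> :: "complex mat" assume \<sigma>: "\<sigma> \<in> carrier_mat 4 4"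
  have Psi_action: "outer (Psi \<theta>) (Psi \<theta>) * \<sigma> = Omega1 * (Omega_rot (R2 \<theta>) * (Omega_rot (R3 \<theta>) * \<sigma>))"
    unfolding Omega_product[symmetric, of \<theta>] Omega2_eq_Omega_rot Omega3_eq_Omega_rot
    using carrier_matD[OF Omega_rot_carrier[OF R2_carrier]] carrier_matD[OF Omega_rot_carrier[OF R3_carrier]]
      carrier_matD[OF \<sigma>]
    by (simp add: Omega1_eq_diag4 assoc_mult_dim)
  show "Mt 3 (R2 \<theta>) 2 * kron \<sigma> (proj_zeros 1) = kron (Omega2 \<theta> * \<sigma>) (proj_zeros 1)"
    using Mt_action[of 2 3, OF _ _ R2_carrier R2_unitary \<sigma>] by (simp add: Omega2_eq_Omega_rot)
  show "Mt 3 (R3 \<theta>) 2 * kron \<sigma> (proj_zeros 1) = kron (Omega3 \<theta> * \<sigma>) (proj_zeros 1)"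
    using Mt_action[of 2 3, OF _ _ R3_carrier R3_unitary \<sigma>] by (simp add: Omega3_eq_Omega_rot)
  show "Mb 4 (R2 \<theta>) 2 3 * kron \<sigma> (proj_zeros 2) = kron (Omega2 \<theta> * \<sigma>) (proj_zeros 2)"
    using Mb_action[of 2 4 3, OF _ _ _ _ _ R2_carrier \<sigma>] by (simp add: Omega2_eq_Omega_rot)
  show "Mb 4 (R3 \<theta>) 2 3 * kron \<sigma> (proj_zeros 2) = kron (Omega3 \<theta> * \<sigma>) (proj_zeros 2)"
    using Mb_action[of 2 4 3, OF _ _ _ _ _ R3_carrier \<sigma>] by (simp add: Omega3_eq_Omega_rot)
  show "M1 5 2 * Mt 5 (R2 \<theta>) 3 * Mt 5 (R3 \<theta>) 4 * kron \<sigma> (proj_zeros 3)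
      = kron (outer (Psi \<theta>) (Psi \<theta>) * \<sigma>) (proj_zeros 3)"
    using M1_Mt_Mt_action[of 2 5 3 4, OF _ _ _ _ _ _ R2_carrier R2_unitary R3_carrier R3_unitary \<sigma>]
    by (simp add: Psi_action)
  show "M1 7 2 * Mb 7 (R2 \<theta>) 3 4 * Mb 7 (R3 \<theta>) 5 6 * kron \<sigma> (proj_zeros 5)
      = kron (outer (Psi \<theta>) (Psi \<theta>) * \<sigma>) (proj_zeros 5)"
    using M1_Mb_Mb_action[of 2 7 3 4 5 6, OF _ _ _ _ _ _ _ _ _ _ _ _ R2_carrier R3_carrier \<sigma>]
    by (simp add: Psi_action)
qed (rule Omega_product)

end
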